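(* Fix $N>0$ and let $S=\{(v,w)\in\mathbb{C}^2\times\mathbb{C}^2:\ [v\,w]=N\}$ where $[a\,b]:=a^{\dot2}b^{\dot1}-a^{\dot1}b^{\dot2}$. For $u\in\mathbb{C}^2\setminus\{0\}$ put $\hat u=(-\bar u^{\dot2},\bar u^{\dot1})$, $\|u\|^2=|u^{\dot1}|^2+|u^{\dot2}|^2$, $\vartheta=\sqrt{1+N/\|u\|^2}$, and for $\sigma\in\mathbb{C}^\times$ $$\Phi(u,\sigma)=\big(v(\sigma),w(\sigma)\big),\qquad v(\sigma)=u+\sigma\hat u,\quad w(\sigma)=\hat u+\sigma^{-1}\vartheta^2u .$$ Then: (i) $\Phi(u,\sigma)\in S$ for all $u\neq0,\sigma\neq0$; (ii) the map $\iota(v,w)=(-\hat w,\hat v)$ is a fixed-point-free antiholomorphic involution of $S$, and each reparametrized curve $\sigma\mapsto\Phi(u,\vartheta\sigma)$ is mapped by $\iota$ to itself, the point with parameter $\sigma$ going to the point with parameter $-1/\bar\sigma$; (iii) let $\Omega_N$ be the holomorphic $3$-form on $S$ equal to $-\,dv^{\dot1}\wedge dv^{\dot2}\wedge dw^{\dot1}/v^{\dot1}$ where $v^{\dot1}\neq0$ (the Poincaré residue of $-d^2v\wedge d^2w/([v\,w]-N)$). Then the fibre integral of $\Phi^*\Omega_N$ over a small circle $|\sigma|=\varepsilon$, oriented counterclockwise, satisfies $$\frac{1}{2\pi}\oint_{|\sigma|=\varepsilon}\Phi^*\Omega_N=\omega_N:=i\big(du^{\dot1}\wedge d\bar u^{\dot1}+du^{\dot2}\wedge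 d\bar u^{\dot2}\big)+iN\,\frac{[u\,du]\wedge[\hat u\,d\hat u]}{\|u\|^4},$$ and $\omega_N=i\partial\bar\partial K$ with $K=\|u\|^2+N\log\|u\|^2$.
   Context: Complex conjugation of a pair $a=(a^{\dot1},a^{\dot2})$ is the "quaternionic conjugate" $\hat a=(-\bar a^{\dot2},\bar a^{\dot1})$, applied componentwise also to differentials; $[u\,du]=u^{\dot2}du^{\dot1}-u^{\dot1}du^{\dot2}$ and $[\hat u\,d\hat u]=\bar u^{\dot2}d\bar u^{\dot1}-\bar u^{\dot1}d\bar u^{\dot2}$. The fibre integral of a form $d\sigma\wedge\beta+(\text{terms without }d\sigma,d\bar\sigma)$ over the circle is $(\oint\cdot\,d\sigma)\,\beta$, computed by residues in $\sigma$. *)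

theory Defs
  imports "HOL-Analysis.Analysis"
begin

text \<open>Points of C^2 are pairs (a1, a2) of complex numbers; points of C^2 x C^2 are pairs (v, w).
  Tangent vectors are elements of the same (real) vector spaces.\<close>

type_synonym c2 = "complex \<times> complex"
type_synonym c4 = "c2 \<times> c2"

definition hatc :: "c2 \<Rightarrow> c2" where
  "hatc a = (- cnj (snd a), cnj (fst a))"

definition brk :: "c2 \<Rightarrow> c2 \<Rightarrow> complex" where
  "brk a b = snd a * fst b - fst a * snd b"

definition nsq :: "c2 \<Rightarrow> real" where
  "nsq u = (cmod (fst u))\<^sup>2 + (cmod (snd u))\<^sup>2"

definition theta :: "real \<Rightarrow> c2 \<Rightarrow> real" where
  "theta N u = sqrt (1 + N / nsq u)"

definition cscal :: "complex \<Rightarrow> c2 \<Rightarrow> c2" where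
  "cscal c a = (c * fst a, c * snd a)"

definition S :: "real \<Rightarrow> c4 set" where
  "S N = {p. brk (fst p) (snd p) = of_real N}"

definition Phi :: "real \<Rightarrow> c2 \<Rightarrow> complex \<Rightarrow> c4" where
  "Phi N u \<sigma> = (u + cscal \<sigma> (hatc u),
                 hatc u + cscal (inverse \<sigma> * of_real ((theta N u)\<^sup>2)) u)"

definition iota :: "c4 \<Rightarrow> c4" where
  "iota p = (- hatc (snd p), hatc (fst p))"

definition cscal4 :: "complex \<Rightarrow> c4 \<Rightarrow> c4" where
  "cscal4 c p = (cscal c (fst p), cscal c (snd p))"

definition antiholomorphic_on :: "c4 set \<Rightarrow> (c4 \<Rightarrow> c4) \<Rightarrow> bool" where
  "antiholomorphic_on U f \<longleftrightarrow>
     (\<forall>p\<in>U. \<exists>D. (f has_derivative D) (at p) \<and> (\<forall>A. D (cscal4 \<i> A) = cscal4 (- \<i>) (D A)))"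

definition det3 :: "complex \<Rightarrow> complex \<Rightarrow> complex \<Rightarrow> complex \<Rightarrow> complex \<Rightarrow> complex
                    \<Rightarrow> complex \<Rightarrow> complex \<Rightarrow> complex \<Rightarrow> complex" where
  "det3 a11 a12 a13 a21 a22 a23 a31 a32 a33 =
     a11 * (a22 * a33 - a23 * a32) - a12 * (a21 * a33 - a23 * a31) + a13 * (a21 * a32 - a22 * a31)"

text \<open>The 3-form Omega_N on S in the chart v1 /= 0:  - dv1 /\ dv2 /\ dw1 / v1,
  evaluated at the point p on tangent vectors A, B, C.
  (a1 /\ a2 /\ a3)(A,B,C) = det [a_i(A_j)].\<close>
definition OmegaN :: "real \<Rightarrow> c4 \<Rightarrow> c4 \<Rightarrow> c4 \<Rightarrow> c4 \<Rightarrow> complex" where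
  "OmegaN N p A B C =
     - det3 (fst (fst A)) (snd (fst A)) (fst (snd A))
            (fst (fst B)) (snd (fst B)) (fst (snd B))
            (fst (fst C)) (snd (fst C)) (fst (snd C)) / fst (fst p)"

definition PhiMap :: "real \<Rightarrow> c2 \<times> complex \<Rightarrow> c4" where
  "PhiMap N x = Phi N (fst x) (snd x)"

definition pullOmega :: "real \<Rightarrow> c2 \<times> complex \<Rightarrow> c2 \<times> complex \<Rightarrow> c2 \<times> complex \<Rightarrow> c2 \<times> complex \<Rightarrow> complex" where
  "pullOmega N x X Y Z =
     (let D = frechet_derivative (PhiMap N) (at x) in OmegaN N (PhiMap N x) (D X) (D Y) (D Z))"

text \<open>Fibre integral over the circle |sigma| = eps, counterclockwise, as a 2-form in u:
  integrate the 3-form with the circle tangent in the first slot and the horizontal lifts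
  (X,0), (Y,0) of the base tangent vectors in the other slots.\<close>
definition fibre_int :: "real \<Rightarrow> real \<Rightarrow> c2 \<Rightarrow> c2 \<Rightarrow> c2 \<Rightarrow> complex" where
  "fibre_int N \<epsilon> u X Y =
     integral {0..2*pi} (\<lambda>t. pullOmega N (u, of_real \<epsilon> * cis t)
                                ((0,0), \<i> * of_real \<epsilon> * cis t) (X, 0) (Y, 0))"

definition wedge2 :: "(c2 \<Rightarrow> complex) \<Rightarrow> (c2 \<Rightarrow> complex) \<Rightarrow> c2 \<Rightarrow> c2 \<Rightarrow> complex" where
  "wedge2 a b X Y = a X * b Y - a Y * b X"

definition omegaN :: "real \<Rightarrow> c2 \<Rightarrow> c2 \<Rightarrow> c2 \<Rightarrow> complex" where
  "omegaN N u X Y =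
     \<i> * (wedge2 (\<lambda>Z. fst Z) (\<lambda>Z. cnj (fst Z)) X Y + wedge2 (\<lambda>Z. snd Z) (\<lambda>Z. cnj (snd Z)) X Y)
     + \<i> * of_real N *
       wedge2 (\<lambda>Z. snd u * fst Z - fst u * snd Z)
              (\<lambda>Z. cnj (snd u) * cnj (fst Z) - cnj (fst u) * cnj (snd Z)) X Y
       / of_real ((nsq u)\<^sup>2)"

definition ecoord :: "nat \<Rightarrow> c2" where
  "ecoord j = (if j = 1 then (1, 0) else (0, 1))"

definition coordc :: "nat \<Rightarrow> c2 \<Rightarrow> complex" where
  "coordc j Z = (if j = 1 then fst Z else snd Z)"

definition wirt :: "nat \<Rightarrow> (c2 \<Rightarrow> complex) \<Rightarrow> c2 \<Rightarrow> complex" where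
  "wirt j F x = (frechet_derivative F (at x) (ecoord j)
                 - \<i> * frechet_derivative F (at x) (cscal \<i> (ecoord j))) / 2"

definition wirtbar :: "nat \<Rightarrow> (c2 \<Rightarrow> complex) \<Rightarrow> c2 \<Rightarrow> complex" where
  "wirtbar j F x = (frechet_derivative F (at x) (ecoord j)
                    + \<i> * frechet_derivative F (at x) (cscal \<i> (ecoord j))) / 2"

definition i_ddbar :: "(c2 \<Rightarrow> complex) \<Rightarrow> c2 \<Rightarrow> c2 \<Rightarrow> c2 \<Rightarrow> complex" where
  "i_ddbar F x X Y = \<i> * (\<Sum>j\<in>{1,2}. \<Sum>k\<in>{1,2}.
       wirt j (wirtbar k F) x * wedge2 (coordc j) (\<lambda>Z. cnj (coordc k Z)) X Y)"

definition Kpot :: "real \<Rightarrow> c2 \<Rightarrow> complex" where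
  "Kpot N u = of_real (nsq u + N * ln (nsq u))"

end

theory Submission
  imports Defs
begin

text \<open>Statements (i) and (ii) are direct computations: along the curve
  [v w] = (\<vartheta>^2 - 1) |u|^2 = N, and \<iota> replaces the bracket by its conjugate.
  For (iii), in the chart v1 \<noteq> 0 the pullback of \<Omega>, evaluated on the circle tangent
  i\<sigma> d/d\<sigma> and on the horizontal lifts of X, Y, is a Laurent polynomial
  \<alpha>/\<sigma> + \<omega>(X,Y) + \<gamma>\<sigma>, because the 3x3 determinant is divisible by v1 = u1 - \<sigma> cnj(u2).
  Integrating over |\<sigma>| = \<epsilon> kills the terms in 1/\<sigma> and \<sigma>, and small circles stay inside
  the chart. For (iv), the antiholomorphic derivatives of K are (1 + N/|u|^2) u_k, and one more
  holomorphic derivative produces exactly the coefficients of \<omega>.\<close>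

lemma nsq_eq_inner: "nsq u = inner u u"
  by (simp add: nsq_def inner_prod_def dot_square_norm)

lemma of_real_nsq: "complex_of_real (nsq u) = fst u * cnj (fst u) + snd u * cnj (snd u)"
  unfolding nsq_def of_real_add complex_norm_square by simp

lemma nsq_pos: "u \<noteq> 0 \<Longrightarrow> nsq u > 0"
  by (simp add: nsq_eq_inner)

lemma has_derivative_nsq: "(nsq has_derivative (\<lambda>h. 2 * inner u h)) (at u)"
  unfolding nsq_eq_inner[abs_def]
  by (auto intro!: derivative_eq_intros simp: inner_commute)

lemma of_real_inner_c2:
  "complex_of_real (2 * inner u h)
     = fst h * cnj (fst u) + fst u * cnj (fst h) + snd h * cnj (snd u) + snd u * cnj (snd h)"
  by (simp add: inner_prod_def inner_complex_def complex_eq_iff algebra_simps)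

lemma theta_sq: "N \<ge> 0 \<Longrightarrow> (theta N u)\<^sup>2 = 1 + N / nsq u"
  by (simp add: theta_def nsq_eq_inner)

lemma theta_pos: "N \<ge> 0 \<Longrightarrow> theta N u > 0"
  by (simp add: theta_def nsq_eq_inner add_pos_nonneg)

lemma brk_add_hatc:
  assumes "\<sigma> \<noteq> 0"
  shows "brk (u + cscal \<sigma> (hatc u)) (hatc u + cscal (inverse \<sigma> * t) u) = (t - 1) * of_real (nsq u)"
  using assms by (simp add: of_real_nsq brk_def hatc_def cscal_def field_simps)

lemma Phi_in_S:
  assumes "N \<ge> 0" "u \<noteq> 0" "\<sigma> \<noteq> 0"
  shows "Phi N u \<sigma> \<in> S N"
proof -
  have "nsq u > 0"
    using assms(2) by (rule nsq_pos)
  then show ?thesis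
    using assms by (simp add: S_def Phi_def brk_add_hatc theta_sq)
qed

lemma hatc_hatc: "hatc (hatc a) = - a"
  by (simp add: hatc_def prod_eq_iff)

lemma hatc_minus: "hatc (- a) = - hatc a"
  by (simp add: hatc_def)

lemma brk_hatc_right: "brk v (hatc v) = - of_real (nsq v)"
  by (simp add: brk_def hatc_def of_real_nsq algebra_simps)

lemma brk_iota: "brk (fst (iota p)) (snd (iota p)) = cnj (brk (fst p) (snd p))"
  by (simp add: iota_def hatc_def brk_def algebra_simps)

lemma iota_S: "iota ` S N \<subseteq> S N"
  by (auto simp: S_def brk_iota)

lemma iota_iota: "iota (iota p) = p"
  by (simp add: iota_def hatc_hatc hatc_minus)

lemma iota_no_fixpoint_S:
  assumes "N > 0" "p \<in> S N"
  shows "iota p \<noteq> p"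
proof
  assume "iota p = p"
  then have "snd p = hatc (fst p)"
    by (auto simp: iota_def prod_eq_iff)
  then have "of_real N = - complex_of_real (nsq (fst p))"
    using assms(2) by (simp add: S_def brk_hatc_right)
  then have "N = - nsq (fst p)"
    by (metis of_real_eq_iff of_real_minus)
  moreover have "nsq (fst p) \<ge> 0"
    by (simp add: nsq_def)
  ultimately show False
    using assms(1) by linarith
qed

lemma bounded_linear_iota: "bounded_linear iota"
  by unfold_locales (auto simp: iota_def hatc_def algebra_simps norm_Pair intro!: exI[of _ 2])

lemma antiholomorphic_iota: "antiholomorphic_on UNIV iota"
  unfolding antiholomorphic_on_def
  by (auto intro!: exI[of _ iota] bounded_linear.has_derivative[OF bounded_linear_iota]
      simp: iota_def hatc_def cscal4_def cscal_def)

lemma iota_Phi: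
  assumes "N \<ge> 0" "\<sigma> \<noteq> 0"
  shows "iota (Phi N u (of_real (theta N u) * \<sigma>)) = Phi N u (of_real (theta N u) * (- 1 / cnj \<sigma>))"
  using assms theta_pos[OF assms(1), of u]
  by (cases u) (simp add: iota_def Phi_def hatc_def cscal_def power2_eq_square field_simps)

lemma wirtbar_has_derivative:
  "(F has_derivative F') (at x) \<Longrightarrow> wirtbar k F x = (F' (ecoord k) + \<i> * F' (cscal \<i> (ecoord k))) / 2"
  by (simp add: wirtbar_def frechet_derivative_at[symmetric])

lemma wirt_has_derivative:
  "(F has_derivative F') (at x) \<Longrightarrow> wirt j F x = (F' (ecoord j) - \<i> * F' (cscal \<i> (ecoord j))) / 2"
  by (simp add: wirt_def frechet_derivative_at[symmetric])

lemma has_derivative_radial: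
  assumes "(g has_real_derivative g') (at (nsq x))"
  shows "((\<lambda>z. g (nsq z)) has_derivative (\<lambda>h. g' * (2 * inner x h))) (at x)"
  using has_derivative_compose[OF has_derivative_nsq assms[unfolded has_field_derivative_def]]
  by (simp add: mult.commute)

lemma wirtbar_radial:
  assumes "(g has_real_derivative g') (at (nsq x))" "k \<in> {1, 2}"
  shows "wirtbar k (\<lambda>z. of_real (g (nsq z))) x = of_real g' * coordc k x"
proof -
  have "((\<lambda>z. complex_of_real (g (nsq z))) has_derivative (\<lambda>h. of_real (g' * (2 * inner x h)))) (at x)"
    by (auto intro!: derivative_eq_intros has_derivative_radial[OF assms(1)])
  then show ?thesis
    using assms(2)
    by (auto simp: wirtbar_has_derivative
      ecoord_def cscal_def coordc_def inner_prod_def complex_eq_iff algebra_simps)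
qed

lemma bounded_linear_coordc: "bounded_linear (coordc k)"
  unfolding coordc_def by (cases "k = 1") (simp_all add: bounded_linear_fst bounded_linear_snd)

lemma wirt_radial_times_coordc:
  assumes "(h has_real_derivative h') (at (nsq x))" "j \<in> {1, 2}" "k \<in> {1, 2}"
  shows "wirt j (\<lambda>z. of_real (h (nsq z)) * coordc k z) x
           = of_real h' * coordc k x * cnj (coordc j x) + (if j = k then of_real (h (nsq x)) else 0)"
proof -
  have "((\<lambda>z. of_real (h (nsq z)) * coordc k z) has_derivative
          (\<lambda>v. of_real (h (nsq x)) * coordc k v + of_real (h' * (2 * inner x v)) * coordc k x)) (at x)"
    by (auto intro!: derivative_eq_intros has_derivative_radial[OF assms(1)]
        bounded_linear.has_derivative[OF bounded_linear_coordc])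
  then show ?thesis
    using assms(2,3)
    by (auto simp: wirt_has_derivative ecoord_def cscal_def coordc_def inner_prod_def
        complex_eq_iff field_simps)
qed

lemma has_real_derivative_potential:
  "t > 0 \<Longrightarrow> ((\<lambda>t. t + N * ln t) has_real_derivative 1 + N / t) (at t)"
  by (auto intro!: derivative_eq_intros simp: field_simps)

lemma has_real_derivative_potential_deriv:
  "t > 0 \<Longrightarrow> ((\<lambda>t. 1 + N / t) has_real_derivative - N / t\<^sup>2) (at t)"
  by (auto intro!: derivative_eq_intros simp: field_simps power2_eq_square)

lemma wirtbar_Kpot:
  assumes "x \<noteq> 0" "k \<in> {1, 2}"
  shows "wirtbar k (Kpot N) x = of_real (1 + N / nsq x) * coordc k x"
  using wirtbar_radial[OF has_real_derivative_potential[OF nsq_pos[OF assms(1)]] assms(2)]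
  by (simp add: Kpot_def[abs_def])

lemma wirt_wirtbar_Kpot:
  assumes "u \<noteq> 0" "j \<in> {1, 2}" "k \<in> {1, 2}"
  shows "wirt j (wirtbar k (Kpot N)) u
           = (if j = k then of_real (1 + N / nsq u) else 0)
             - of_real (N / (nsq u)\<^sup>2) * coordc k u * cnj (coordc j u)"
proof -
  let ?G = "\<lambda>z. of_real (1 + N / nsq z) * coordc k z"
  have u: "nsq u > 0"
    using assms(1) by (rule nsq_pos)
  have "?G differentiable at u"
    using u by (auto intro!: derivative_eq_intros has_derivative_radial has_real_derivative_potential_deriv
        bounded_linear.has_derivative[OF bounded_linear_coordc] simp: differentiable_def)
  then have "frechet_derivative ?G (at u) = frechet_derivative (wirtbar k (Kpot N)) (at u)"
    by (rule frechet_derivative_transform_within_open[where X = "- {0}"])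
      (use assms in \<open>auto simp: wirtbar_Kpot\<close>)
  then have "wirt j (wirtbar k (Kpot N)) u = wirt j ?G u"
    by (simp add: wirt_def)
  also have "\<dots> = (if j = k then of_real (1 + N / nsq u) else 0)
             - of_real (N / (nsq u)\<^sup>2) * coordc k u * cnj (coordc j u)"
    using wirt_radial_times_coordc[OF has_real_derivative_potential_deriv[OF u] assms(2,3)]
    by simp
  finally show ?thesis .
qed

lemma omegaN_eq_i_ddbar_Kpot:
  assumes "u \<noteq> 0"
  shows "omegaN N u X Y = i_ddbar (Kpot N) u X Y"
proof -
  define c where "c = fst u * cnj (fst u) + snd u * cnj (snd u)"
  have c: "complex_of_real (nsq u) = c"
    by (simp add: c_def of_real_nsq)
  have "c \<noteq> 0"
    using nsq_pos[OF assms] c by force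
  then show ?thesis
    unfolding i_ddbar_def omegaN_def
    by (simp add: wirt_wirtbar_Kpot[OF assms] wedge2_def coordc_def c field_simps power2_eq_square)
      (simp add: c_def algebra_simps)
qed

definition dPhi :: "real \<Rightarrow> c2 \<Rightarrow> complex \<Rightarrow> c2 \<times> complex \<Rightarrow> c4" where
  "dPhi N u \<sigma> = (\<lambda>(X, h).
     (X + cscal h (hatc u) + cscal \<sigma> (hatc X),
      hatc X + cscal (- h / \<sigma>\<^sup>2 * of_real (1 + N / nsq u)) u
        + cscal (inverse \<sigma>) (cscal (of_real (1 + N / nsq u)) X
                               + cscal (of_real (- N * (2 * inner u X) / (nsq u)\<^sup>2)) u)))"

lemma has_derivative_PhiMap:
  assumes "N \<ge> 0" "u \<noteq> 0" "\<sigma> \<noteq> 0"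
  shows "(PhiMap N has_derivative dPhi N u \<sigma>) (at (u, \<sigma>))"
proof -
  have eq: "PhiMap N = (\<lambda>x. (fst x + cscal (snd x) (hatc (fst x)),
      hatc (fst x) + cscal (inverse (snd x) * of_real (1 + N / inner (fst x) (fst x))) (fst x)))"
    using assms(1) by (simp add: fun_eq_iff PhiMap_def Phi_def theta_sq nsq_eq_inner)
  have "inner u u > 0"
    using nsq_pos[OF assms(2)] by (simp add: nsq_eq_inner)
  then show ?thesis
    using assms(3)
    unfolding eq dPhi_def hatc_def cscal_def nsq_eq_inner
    by (auto intro!: derivative_eq_intros has_derivative_fst[OF has_derivative_ident]
          has_derivative_snd[OF has_derivative_ident]
        simp: fun_eq_iff field_simps power2_eq_square inner_commute)
qed

text \<open>The variables ub1, xb1, ... stand for the conjugates of u1, x1, ...; the identity holds for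
  independent values, so it is purely algebraic. Grouping the determinant by powers of s, the relation
  c = u1 ub1 + u2 ub2 is needed only for the coefficients of 1 and s.\<close>

lemma det3_Laurent:
  fixes u1 u2 ub1 ub2 x1 x2 xb1 xb2 y1 y2 yb1 yb2 s n c :: complex
  assumes c_eq: "c = u1 * ub1 + u2 * ub2" and c: "c \<noteq> 0" and s: "s \<noteq> 0"
  defines "T \<equiv> 1 + n / c"
  defines "tX \<equiv> - n * (x1 * ub1 + u1 * xb1 + x2 * ub2 + u2 * xb2) / c\<^sup>2"
  defines "tY \<equiv> - n * (y1 * ub1 + u1 * yb1 + y2 * ub2 + u2 * yb2) / c\<^sup>2"
  defines "W \<equiv> (x1 * yb1 - y1 * xb1) + (x2 * yb2 - y2 * xb2) + n * ((u2 * x1 - u1 * x2) * (ub2 * yb1 - ub1 * yb2)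
                         - (u2 * y1 - u1 * y2) * (ub2 * xb1 - ub1 * xb2)) / c\<^sup>2"
  shows "- det3 (- \<i> * s * ub2) (\<i> * s * ub1) (- \<i> * T * u1 / s)
            (x1 - s * xb2) (x2 + s * xb1) (- xb2 + (T * x1 + tX * u1) / s)
            (y1 - s * yb2) (y2 + s * yb1) (- yb2 + (T * y1 + tY * u1) / s)
        = (u1 - s * ub2) *
          (- \<i> * T * (x2 * y1 - x1 * y2) / s + \<i> * W - \<i> * (xb2 * yb1 - xb1 * yb2) * s)"
proof -
  define LX where "LX = ub1 * x1 + ub2 * x2"
  define LY where "LY = ub1 * y1 + ub2 * y2"
  define MX where "MX = ub2 * xb1 - ub1 * xb2"
  define MY where "MY = ub2 * yb1 - ub1 * yb2"
  have coeff0: "(T * y1 + tY * u1) * LX - (T * x1 + tX * u1) * LY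
              + T * u1 * ((x1 * yb1 - y1 * xb1) + (x2 * yb2 - y2 * xb2))
       = u1 * W - T * ub2 * (x1 * y2 - x2 * y1)"
    using c unfolding T_def tX_def tY_def W_def LX_def LY_def
    by (simp add: field_simps power2_eq_square) (simp add: c_eq algebra_simps)
  have coeff1: "(T * y1 + tY * u1) * MX - yb2 * LX - (T * x1 + tX * u1) * MY + xb2 * LY
              + T * u1 * (xb1 * yb2 - xb2 * yb1)
       = u1 * (xb1 * yb2 - xb2 * yb1) - ub2 * W"
    using c unfolding T_def tX_def tY_def W_def LX_def LY_def MX_def MY_def
    by (simp add: field_simps power2_eq_square) (simp add: c_eq algebra_simps)
  have coeff2: "xb2 * MY - yb2 * MX = - ub2 * (xb1 * yb2 - xb2 * yb1)"
    unfolding MX_def MY_def by (simp add: algebra_simps)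
  have "- det3 (- \<i> * s * ub2) (\<i> * s * ub1) (- \<i> * T * u1 / s)
            (x1 - s * xb2) (x2 + s * xb1) (- xb2 + (T * x1 + tX * u1) / s)
            (y1 - s * yb2) (y2 + s * yb1) (- yb2 + (T * y1 + tY * u1) / s)
     = \<i> * T * u1 * (x1 * y2 - x2 * y1) / s
       + \<i> * ((T * y1 + tY * u1) * LX - (T * x1 + tX * u1) * LY
              + T * u1 * ((x1 * yb1 - y1 * xb1) + (x2 * yb2 - y2 * xb2)))
       + \<i> * ((T * y1 + tY * u1) * MX - yb2 * LX - (T * x1 + tX * u1) * MY + xb2 * LY
              + T * u1 * (xb1 * yb2 - xb2 * yb1)) * s
       + \<i> * (xb2 * MY - yb2 * MX) * s\<^sup>2"
    using s unfolding det3_def LX_def LY_def MX_def MY_def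
    by (simp add: field_simps power2_eq_square)
  also have "\<dots> = \<i> * T * u1 * (x1 * y2 - x2 * y1) / s
       + \<i> * (u1 * W - T * ub2 * (x1 * y2 - x2 * y1))
       + \<i> * (u1 * (xb1 * yb2 - xb2 * yb1) - ub2 * W) * s
       + \<i> * (- ub2 * (xb1 * yb2 - xb2 * yb1)) * s\<^sup>2"
    by (simp only: coeff0 coeff1 coeff2)
  also have "\<dots> = (u1 - s * ub2) *
          (- \<i> * T * (x2 * y1 - x1 * y2) / s + \<i> * W - \<i> * (xb2 * yb1 - xb1 * yb2) * s)"
    using s by (simp add: field_simps power2_eq_square)
  finally show ?thesis .
qed

lemma pullOmega_Laurent:
  assumes "N \<ge> 0" "u \<noteq> 0" "\<sigma> \<noteq> 0" and v1: "fst u - \<sigma> * cnj (snd u) \<noteq> 0"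
  shows "pullOmega N (u, \<sigma>) ((0, 0), \<i> * \<sigma>) (X, 0) (Y, 0)
           = - \<i> * of_real (1 + N / nsq u) * brk X Y / \<sigma> + omegaN N u X Y - \<i> * cnj (brk X Y) * \<sigma>"
proof -
  define c where "c = fst u * cnj (fst u) + snd u * cnj (snd u)"
  have c: "complex_of_real (nsq u) = c"
    by (simp add: c_def of_real_nsq)
  have c_nz: "c \<noteq> 0"
    using nsq_pos[OF assms(2)] c by force
  note Laurent = det3_Laurent[OF c_def c_nz assms(3), where n = "of_real N"
      and ?x1.0 = "fst X" and ?x2.0 = "snd X" and ?xb1.0 = "cnj (fst X)" and ?xb2.0 = "cnj (snd X)"
      and ?y1.0 = "fst Y" and ?y2.0 = "snd Y" and ?yb1.0 = "cnj (fst Y)" and ?yb2.0 = "cnj (snd Y)"]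
  define T where "T = 1 + of_real N / c"
  define t where "t Z = - of_real N * (fst Z * cnj (fst u) + fst u * cnj (fst Z) + snd Z * cnj (snd u) + snd u * cnj (snd Z)) / c\<^sup>2" for Z
  have dPhi_fibre: "dPhi N u \<sigma> ((0, 0), \<i> * \<sigma>)
      = ((- \<i> * \<sigma> * cnj (snd u), \<i> * \<sigma> * cnj (fst u)), (- \<i> * T * fst u / \<sigma>, - \<i> * T * snd u / \<sigma>))"
    using assms(3)
    by (simp add: dPhi_def hatc_def cscal_def T_def c inner_prod_def power2_eq_square field_simps)
  have dPhi_base: "dPhi N u \<sigma> (Z, 0)
      = ((fst Z - \<sigma> * cnj (snd Z), snd Z + \<sigma> * cnj (fst Z)),
         (- cnj (snd Z) + (T * fst Z + t Z * fst u) / \<sigma>, cnj (fst Z) + (T * snd Z + t Z * snd u) / \<sigma>))" for Z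
    using of_real_inner_c2[of u Z] c_nz
    by (cases Z) (simp add: dPhi_def hatc_def cscal_def T_def t_def c power2_eq_square field_simps)
  have "pullOmega N (u, \<sigma>) ((0, 0), \<i> * \<sigma>) (X, 0) (Y, 0)
      = OmegaN N (PhiMap N (u, \<sigma>)) (dPhi N u \<sigma> ((0, 0), \<i> * \<sigma>)) (dPhi N u \<sigma> (X, 0)) (dPhi N u \<sigma> (Y, 0))"
    by (simp add: pullOmega_def Let_def frechet_derivative_at[OF has_derivative_PhiMap[OF assms(1-3)], symmetric])
  also have "\<dots> = - det3 (- \<i> * \<sigma> * cnj (snd u)) (\<i> * \<sigma> * cnj (fst u)) (- \<i> * T * fst u / \<sigma>)
      (fst X - \<sigma> * cnj (snd X)) (snd X + \<sigma> * cnj (fst X)) (- cnj (snd X) + (T * fst X + t X * fst u) / \<sigma>)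
      (fst Y - \<sigma> * cnj (snd Y)) (snd Y + \<sigma> * cnj (fst Y)) (- cnj (snd Y) + (T * fst Y + t Y * fst u) / \<sigma>)
      / (fst u - \<sigma> * cnj (snd u))"
    by (simp add: OmegaN_def dPhi_fibre dPhi_base PhiMap_def Phi_def hatc_def cscal_def)
  also have "\<dots> = - \<i> * T * (snd X * fst Y - fst X * snd Y) / \<sigma>
      + \<i> * ((fst X * cnj (fst Y) - fst Y * cnj (fst X)) + (snd X * cnj (snd Y) - snd Y * cnj (snd X))
        + of_real N * ((snd u * fst X - fst u * snd X) * (cnj (snd u) * cnj (fst Y) - cnj (fst u) * cnj (snd Y))
          - (snd u * fst Y - fst u * snd Y) * (cnj (snd u) * cnj (fst X) - cnj (fst u) * cnj (snd X))) / c\<^sup>2)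
      - \<i> * (cnj (snd X) * cnj (fst Y) - cnj (fst X) * cnj (snd Y)) * \<sigma>"
    unfolding Laurent T_def t_def using v1 by simp
  also have "\<dots> = - \<i> * of_real (1 + N / nsq u) * brk X Y / \<sigma> + omegaN N u X Y - \<i> * cnj (brk X Y) * \<sigma>"
    by (simp add: omegaN_def wedge2_def brk_def T_def c power2_eq_square algebra_simps)
  finally show ?thesis .
qed

lemma has_integral_cis_multiple:
  assumes "n \<noteq> 0"
  shows "((\<lambda>t. cis (of_int n * t)) has_integral 0) {0..2 * pi}"
proof -
  let ?F = "\<lambda>t. cis (of_int n * t) / (\<i> * of_int n)"
  have "((\<lambda>t. cis (of_int n * t)) has_integral ?F (2 * pi) - ?F 0) {0..2 * pi}"
    using assms
    by (intro fundamental_theorem_of_calculus)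
      (auto intro!: derivative_eq_intros simp: has_real_derivative_iff_has_vector_derivative[symmetric]
        has_vector_derivative_def fun_eq_iff scaleR_conv_of_real field_simps)
  moreover have "cis (of_int n * (2 * pi)) = 1"
    using cis_multiple_2pi[of "of_int n"] by (simp add: mult.commute)
  ultimately show ?thesis
    by simp
qed

lemma fibre_int_eq_omegaN:
  assumes "N \<ge> 0" "u \<noteq> 0" "\<epsilon> > 0"
    and v1: "\<And>t. fst u - of_real \<epsilon> * cis t * cnj (snd u) \<noteq> 0"
  shows "fibre_int N \<epsilon> u X Y / (2 * of_real pi) = omegaN N u X Y"
proof -
  define \<alpha> where "\<alpha> = - \<i> * of_real (1 + N / nsq u) * brk X Y / of_real \<epsilon>"
  define \<gamma> where "\<gamma> = - \<i> * cnj (brk X Y) * of_real \<epsilon>"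
  have integrand: "pullOmega N (u, of_real \<epsilon> * cis t) ((0, 0), \<i> * of_real \<epsilon> * cis t) (X, 0) (Y, 0)
      = \<alpha> * cis (of_int (- 1) * t) + omegaN N u X Y + \<gamma> * cis (of_int 1 * t)" for t
    using pullOmega_Laurent[OF assms(1,2) _ v1, of t X Y] assms(3)
    by (simp add: \<alpha>_def \<gamma>_def mult.assoc divide_inverse inverse_mult_distrib flip: cis_inverse)
  have "((\<lambda>t. \<alpha> * cis (of_int (- 1) * t) + omegaN N u X Y + \<gamma> * cis (of_int 1 * t)) has_integral
         \<alpha> * 0 + (2 * pi) *\<^sub>R omegaN N u X Y + \<gamma> * 0) {0..2 * pi}"
    by (intro has_integral_add has_integral_mult_right has_integral_cis_multiple)
      (use has_integral_const_real[of "omegaN N u X Y" 0 "2 * pi"] in simp_all)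
  then have "fibre_int N \<epsilon> u X Y = (2 * pi) *\<^sub>R omegaN N u X Y"
    unfolding fibre_int_def integrand by (simp add: integral_unique)
  then show ?thesis
    by (simp add: scaleR_conv_of_real)
qed

lemma eventually_circle_avoids_v1_zero:
  assumes "u \<noteq> 0"
  shows "\<forall>\<^sub>F \<epsilon> in at_right 0. \<epsilon> > 0 \<and> (\<forall>t. fst u - of_real \<epsilon> * cis t * cnj (snd u) \<noteq> 0)"
proof (cases "fst u = 0")
  case True
  then have "snd u \<noteq> 0"
    using assms by (simp add: prod_eq_iff)
  show ?thesis
    using eventually_at_right_less[of "0 :: real"]
    by eventually_elim (use True \<open>snd u \<noteq> 0\<close> in simp)
next
  case False
  have "((\<lambda>\<epsilon>. \<epsilon> * cmod (snd u)) \<longlongrightarrow> 0) (at_right 0)"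
    by (auto intro!: tendsto_eq_intros)
  then have "\<forall>\<^sub>F \<epsilon> in at_right 0. \<epsilon> * cmod (snd u) < cmod (fst u)"
    by (rule order_tendstoD(2)) (use False in simp)
  with eventually_at_right_less[of "0 :: real"] show ?thesis
  proof eventually_elim
    case (elim \<epsilon>)
    have "cmod (of_real \<epsilon> * cis t * cnj (snd u)) < cmod (fst u)" for t
      using elim by (simp add: norm_mult)
    then show ?case
      using elim by (metis eq_iff_diff_eq_0 less_irrefl)
  qed
qed

theorem mainTheorem3:
  fixes N :: real
  assumes N: "N > 0"
  shows "(\<forall>u \<sigma>. u \<noteq> 0 \<longrightarrow> \<sigma> \<noteq> 0 \<longrightarrow> Phi N u \<sigma> \<in> S N)
    \<and> (iota ` S N \<subseteq> S N \<and> (\<forall>p\<in>S N. iota (iota p) = p) \<and> (\<forall>p\<in>S N. iota p \<noteq> p)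
       \<and> antiholomorphic_on UNIV iota
       \<and> (\<forall>u \<sigma>. u \<noteq> 0 \<longrightarrow> \<sigma> \<noteq> 0 \<longrightarrow>
            iota (Phi N u (of_real (theta N u) * \<sigma>))
              = Phi N u (of_real (theta N u) * (- 1 / cnj \<sigma>))))
    \<and> (\<forall>u. u \<noteq> 0 \<longrightarrow>
         (\<forall>\<^sub>F \<epsilon> in at_right 0. \<forall>X Y.
            fibre_int N \<epsilon> u X Y / (2 * of_real pi) = omegaN N u X Y))
    \<and> (\<forall>u. u \<noteq> 0 \<longrightarrow> (\<forall>X Y. omegaN N u X Y = i_ddbar (Kpot N) u X Y))"
proof -
  have N0: "N \<ge> 0"
    using N by simp
  have fibre: "\<forall>\<^sub>F \<epsilon> in at_right 0. \<forall>X Y. fibre_int N \<epsilon> u X Y / (2 * of_real pi) = omegaN N u X Y"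
    if "u \<noteq> 0" for u
    using eventually_circle_avoids_v1_zero[OF that]
    by eventually_elim (use fibre_int_eq_omegaN[OF N0 that] in blast)
  show ?thesis
    using Phi_in_S[OF N0] iota_no_fixpoint_S[OF N] iota_Phi[OF N0] fibre omegaN_eq_i_ddbar_Kpot
    by (simp add: iota_S iota_iota antiholomorphic_iota)
qed

end
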